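(* All rules of $\mathsf{G}(\mathbf{KT}^+_D)$ except $(D_K^+)$ (that is, the eight propositional rules and $(D_T^+)$) are height-preserving invertible: whenever the conclusion of an instance of such a rule has a derivation of height $n$, each premise of that instance has a derivation of height at most $n$.
   Context: Language: fix a finite nonempty set $\mathsf{Agt}$ of agents and a countable set $\mathsf{Prop}$ of propositional variables; $\mathsf{Grp}$ is the set of nonempty subsets of $\mathsf{Agt}$. Formulas: $\alpha::=p\mid\bot\mid\alpha\wedge\alpha\mid\alpha\vee\alpha\mid\alpha\rightarrow\alpha\mid\neg\alpha\mid D_G\alpha$ ($p\in\mathsf{Prop}$, $G\in\mathsf{Grp}$). Outmost-boxed formula: one of the form $D_G\gamma$. Calculus $\mathsf{G}(\mathbf{KT}^+_D)$ (a derivation is a finite tree built from initial sequents by the rules; its height is the maximum length of a branch from the end sequent to an initial sequent): a T-sequent $\Sigma\mid\Gamma\Rightarrow\Delta$ consists of finite multisets $\Gamma,\Delta$ of formulas and a finite multiset $\Sigma$ of outmost-boxed formulas. Initial sequents: $\Sigma\mid\Gamma,p\Rightarrow p,\Delta$ ($p\in\mathsf{Prop}$) and $\Sigma\mid\bot,\Gamma\Rightarrow\Delta$. Propositional rules (with $\Sigma$ unchanged): $(R\wedge)$ from $\Sigma\mid\Gamma\Rightarrow\Delta,\alpha_1$ and $\Sigma\mid\Gamma\Rightarrow\Delta,\alpha_2$ infer $\Sigma\mid\Gamma\Rightarrow\Delta,\alpha_1\wedge\alpha_2$; $(L\wedge)$ from $\Sigma\mid\alpha_1,\alpha_2,\Gamma\Rightarrow\Delta$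 infer $\Sigma\mid\alpha_1\wedge\alpha_2,\Gamma\Rightarrow\Delta$; $(R\vee)$ from $\Sigma\mid\Gamma\Rightarrow\Delta,\alpha_1,\alpha_2$ infer $\Sigma\mid\Gamma\Rightarrow\Delta,\alpha_1\vee\alpha_2$; $(L\vee)$ from $\Sigma\mid\alpha_1,\Gamma\Rightarrow\Delta$ and $\Sigma\mid\alpha_2,\Gamma\Rightarrow\Delta$ infer $\Sigma\mid\alpha_1\vee\alpha_2,\Gamma\Rightarrow\Delta$; $(R\rightarrow)$ from $\Sigma\mid\alpha_1,\Gamma\Rightarrow\Delta,\alpha_2$ infer $\Sigma\mid\Gamma\Rightarrow\Delta,\alpha_1\rightarrow\alpha_2$; $(L\rightarrow)$ from $\Sigma\mid\Gamma\Rightarrow\Delta,\alpha_1$ and $\Sigma\mid\alpha_2,\Gamma\Rightarrow\Delta$ infer $\Sigma\mid\alpha_1\rightarrow\alpha_2,\Gamma\Rightarrow\Delta$; $(R\neg)$ from $\Sigma\mid\alpha,\Gamma\Rightarrow\Delta$ infer $\Sigma\mid\Gamma\Rightarrow\Delta,\neg\alpha$; $(L\neg)$ from $\Sigma\mid\Gamma\Rightarrow\Delta,\alpha$ infer $\Sigma\mid\neg\alpha,\Gamma\Rightarrow\Delta$. Modal rules: $(D_K^+)$: from $\emptyset\mid\alpha_1,\dots,\alpha_n\Rightarrow\beta$ ($n\ge0$) infer $\Sigma,D_{G_1}\alpha_1,\dots,D_{G_n}\alpha_n\mid\Pi\Rightarrow D_G\beta,\Omega$, provided $G_i\subseteq G$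 for all $i$, $\Sigma$ consists only of formulas $D_H\gamma$ with $H\not\subseteq G$, $\Pi$ only of propositional variables and $\bot$, and $\Omega$ only of propositional variables, $\bot$ and outmost-boxed formulas; $(D_T^+)$: from $D_G\alpha,\Sigma\mid\Gamma,\alpha\Rightarrow\Delta$ infer $\Sigma\mid\Gamma,D_G\alpha\Rightarrow\Delta$. *)

theory Defs
  imports Main "HOL-Library.Multiset"
begin

text \<open>Formulas over agents of a finite type 'a (the finite nonempty set Agt = UNIV)
 and propositional variables indexed by nat (the countable set Prop).
 Box G \<alpha> is D_G \<alpha>; G must be a nonempty group (checked by wf_fm).\<close>

datatype 'a fm = At nat | Bot | And "'a fm" "'a fm" | Or "'a fm" "'a fm"
  | Imp "'a fm" "'a fm" | Neg "'a fm" | Box "'a set" "'a fm"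

fun wf_fm :: "('a::finite) fm \<Rightarrow> bool" where
  "wf_fm (At p) = True"
| "wf_fm Bot = True"
| "wf_fm (And a b) = (wf_fm a \<and> wf_fm b)"
| "wf_fm (Or a b) = (wf_fm a \<and> wf_fm b)"
| "wf_fm (Imp a b) = (wf_fm a \<and> wf_fm b)"
| "wf_fm (Neg a) = wf_fm a"
| "wf_fm (Box G a) = (G \<noteq> {} \<and> wf_fm a)"

definition is_boxed :: "'a fm \<Rightarrow> bool" where
  "is_boxed f \<longleftrightarrow> (\<exists>G a. f = Box G a)"

definition is_atom_or_bot :: "'a fm \<Rightarrow> bool" where
  "is_atom_or_bot f \<longleftrightarrow> f = Bot \<or> (\<exists>p. f = At p)"

text \<open>A T-sequent \<Sigma> | \<Gamma> \<Rightarrow> \<Delta> is the triple (\<Sigma>, \<Gamma>, \<Delta>).\<close>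
type_synonym 'a tseq = "'a fm multiset \<times> 'a fm multiset \<times> 'a fm multiset"

definition wf_tseq :: "('a::finite) tseq \<Rightarrow> bool" where
  "wf_tseq s \<longleftrightarrow> (case s of (S, Gm, D) \<Rightarrow>
     (\<forall>f\<in>#S. is_boxed f) \<and> (\<forall>f\<in>#S + Gm + D. wf_fm f))"

inductive nonK_rule :: "'a tseq list \<Rightarrow> 'a tseq \<Rightarrow> bool" where
  R_and: "nonK_rule [(S, Gm, add_mset a1 D), (S, Gm, add_mset a2 D)] (S, Gm, add_mset (And a1 a2) D)"
| L_and: "nonK_rule [(S, add_mset a1 (add_mset a2 Gm), D)] (S, add_mset (And a1 a2) Gm, D)"
| R_or: "nonK_rule [(S, Gm, add_mset a1 (add_mset a2 D))] (S, Gm, add_mset (Or a1 a2) D)"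
| L_or: "nonK_rule [(S, add_mset a1 Gm, D), (S, add_mset a2 Gm, D)] (S, add_mset (Or a1 a2) Gm, D)"
| R_imp: "nonK_rule [(S, add_mset a1 Gm, add_mset a2 D)] (S, Gm, add_mset (Imp a1 a2) D)"
| L_imp: "nonK_rule [(S, Gm, add_mset a1 D), (S, add_mset a2 Gm, D)] (S, add_mset (Imp a1 a2) Gm, D)"
| R_neg: "nonK_rule [(S, add_mset a Gm, D)] (S, Gm, add_mset (Neg a) D)"
| L_neg: "nonK_rule [(S, Gm, add_mset a D)] (S, add_mset (Neg a) Gm, D)"
| D_T: "nonK_rule [(add_mset (Box G a) S, add_mset a Gm, D)] (S, add_mset (Box G a) Gm, D)"

inductive K_rule :: "'a tseq list \<Rightarrow> 'a tseq \<Rightarrow> bool" where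
  D_K: "\<lbrakk> length As = length Gs; \<forall>Gi\<in>set Gs. Gi \<subseteq> G;
          \<forall>f\<in>#S. \<exists>H c. f = Box H c \<and> \<not> H \<subseteq> G;
          \<forall>f\<in>#P. is_atom_or_bot f;
          \<forall>f\<in>#Om. is_atom_or_bot f \<or> is_boxed f \<rbrakk>
        \<Longrightarrow> K_rule [({#}, mset As, {#b#})]
              (S + mset (map2 Box Gs As), P, add_mset (Box G b) Om)"

text \<open>derivable n s: s has a derivation in G(KT+_D) of height at most n
 (initial sequents have height 0).\<close>
inductive derivable :: "nat \<Rightarrow> ('a::finite) tseq \<Rightarrow> bool" where
  init_at: "\<lbrakk> wf_tseq (S, Gm, D); At p \<in># Gm; At p \<in># D \<rbrakk> \<Longrightarrow> derivable n (S, Gm, D)"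
| init_bot: "\<lbrakk> wf_tseq (S, Gm, D); Bot \<in># Gm \<rbrakk> \<Longrightarrow> derivable n (S, Gm, D)"
| step: "\<lbrakk> nonK_rule ps c; \<forall>p\<in>set ps. derivable n p \<rbrakk> \<Longrightarrow> derivable (Suc n) c"
| stepK: "\<lbrakk> K_rule ps c; wf_tseq c; \<forall>p\<in>set ps. derivable n p \<rbrakk> \<Longrightarrow> derivable (Suc n) c"

end

theory Submission
  imports Defs "HOL-Library.Product_Plus"
begin

text \<open>Every instance of a non-K rule consists of a context \<open>C\<close>, a principal formula \<open>f\<close>
  on one side, and the premises \<open>C + p\<close> for the parts \<open>p\<close> determined by the side and \<open>f\<close>. An axiom
  stays an axiom because \<open>f\<close> is neither an atom nor \<open>\<bottom>\<close>. \<open>(D\<^sub>K\<^sup>+)\<close> cannot end the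
  derivation: outside \<open>\<Sigma>\<close> its conclusion contains only atoms, \<open>\<bottom>\<close> and, on the right, boxes,
  whereas principal formulas are compound and boxed only on the left. If the last rule has
  the same principal formula, its premises are the ones required; any other last rule
  permutes with the inverted one, whose premises are derivable by induction.\<close>

datatype side = Lhs | Rhs

fun principal_part :: "side \<Rightarrow> 'a fm \<Rightarrow> 'a tseq" where
  "principal_part Lhs f = ({#}, {#f#}, {#})"
| "principal_part Rhs f = ({#}, {#}, {#f#})"

fun premise_parts :: "side \<Rightarrow> 'a fm \<Rightarrow> 'a tseq list option" where
  "premise_parts Lhs (And a b) = Some [({#}, {#a, b#}, {#})]"
| "premise_parts Rhs (And a b) = Some [({#}, {#}, {#a#}), ({#}, {#}, {#b#})]"
| "premise_parts Lhs (Or a b) = Some [({#}, {#a#}, {#}), ({#}, {#b#}, {#})]"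
| "premise_parts Rhs (Or a b) = Some [({#}, {#}, {#a, b#})]"
| "premise_parts Lhs (Imp a b) = Some [({#}, {#}, {#a#}), ({#}, {#b#}, {#})]"
| "premise_parts Rhs (Imp a b) = Some [({#}, {#a#}, {#b#})]"
| "premise_parts Lhs (Neg a) = Some [({#}, {#}, {#a#})]"
| "premise_parts Rhs (Neg a) = Some [({#}, {#a#}, {#})]"
| "premise_parts Lhs (Box G a) = Some [({#Box G a#}, {#a#}, {#})]"
| "premise_parts Rhs (Box G a) = None"
| "premise_parts _ (At q) = None"
| "premise_parts _ Bot = None"

lemma nonK_rule_decompose:
  assumes "nonK_rule ps c"
  obtains s f C as where "premise_parts s f = Some as" "c = C + principal_part s f" "ps = map ((+) C) as"
  using assms
proof cases
  case (R_and S Gm a1 D a2)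
  then show ?thesis by (intro that[where s = Rhs and f = "And a1 a2" and C = "(S, Gm, D)"]) auto
next
  case (L_and S a1 a2 Gm D)
  then show ?thesis by (intro that[where s = Lhs and f = "And a1 a2" and C = "(S, Gm, D)"]) auto
next
  case (R_or S Gm a1 a2 D)
  then show ?thesis by (intro that[where s = Rhs and f = "Or a1 a2" and C = "(S, Gm, D)"]) auto
next
  case (L_or S a1 Gm D a2)
  then show ?thesis by (intro that[where s = Lhs and f = "Or a1 a2" and C = "(S, Gm, D)"]) auto
next
  case (R_imp S a1 Gm a2 D)
  then show ?thesis by (intro that[where s = Rhs and f = "Imp a1 a2" and C = "(S, Gm, D)"]) auto
next
  case (L_imp S Gm a1 D a2)
  then show ?thesis by (intro that[where s = Lhs and f = "Imp a1 a2" and C = "(S, Gm, D)"]) auto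
next
  case (R_neg S a Gm D)
  then show ?thesis by (intro that[where s = Rhs and f = "Neg a" and C = "(S, Gm, D)"]) auto
next
  case (L_neg S Gm a D)
  then show ?thesis by (intro that[where s = Lhs and f = "Neg a" and C = "(S, Gm, D)"]) auto
next
  case (D_T G a S Gm D)
  then show ?thesis by (intro that[where s = Lhs and f = "Box G a" and C = "(S, Gm, D)"]) auto
qed

lemma nonK_rule_premise_parts:
  assumes "premise_parts s f = Some as"
  shows "nonK_rule (map ((+) C) as) (C + principal_part s f)"
proof -
  obtain S Gm D where "C = (S, Gm, D)" by (cases C)
  with assms show ?thesis
    by (cases s; cases f) (auto simp: add_mset_commute intro: nonK_rule.intros)
qed

lemma premise_parts_not_atom_or_bot:
  "premise_parts s f = Some as \<Longrightarrow> \<not> is_atom_or_bot f"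
  by (cases s; cases f) (auto simp: is_atom_or_bot_def)

lemma premise_parts_Rhs_not_boxed:
  "premise_parts Rhs f = Some as \<Longrightarrow> \<not> is_boxed f"
  by (cases f) (auto simp: is_boxed_def)

lemma wf_tseq_premise_part:
  assumes "premise_parts s f = Some as" "p \<in> set as" "wf_tseq (C + principal_part s f)"
  shows "wf_tseq (C + p)"
proof -
  obtain S Gm D where "C = (S, Gm, D)" by (cases C)
  with assms show ?thesis
    by (cases s; cases f) (auto simp: wf_tseq_def is_boxed_def)
qed

lemma add_principal_part_eqE:
  assumes "C + principal_part s f = C' + principal_part s' f'" "(s, f) \<noteq> (s', f')"
  obtains E where "C = E + principal_part s' f'" "C' = E + principal_part s f"
proof -
  obtain S Gm D where C: "C = (S, Gm, D)" by (cases C)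
  obtain S' Gm' D' where C': "C' = (S', Gm', D')" by (cases C')
  show ?thesis
  proof (cases s; cases s')
    assume "s = Lhs" "s' = Lhs"
    with assms C C' obtain K where "Gm = add_mset f' K" "Gm' = add_mset f K" "S = S'" "D = D'"
      by (auto simp: add_eq_conv_ex)
    with \<open>s = Lhs\<close> \<open>s' = Lhs\<close> C C' show ?thesis by (intro that[of "(S, K, D)"]) auto
  next
    assume "s = Rhs" "s' = Rhs"
    with assms C C' obtain K where "D = add_mset f' K" "D' = add_mset f K" "S = S'" "Gm = Gm'"
      by (auto simp: add_eq_conv_ex)
    with \<open>s = Rhs\<close> \<open>s' = Rhs\<close> C C' show ?thesis by (intro that[of "(S, Gm, K)"]) auto
  next
    assume "s = Lhs" "s' = Rhs"
    with assms C C' show ?thesis by (intro that[of "(S, Gm, D')"]) auto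
  next
    assume "s = Rhs" "s' = Lhs"
    with assms C C' show ?thesis by (intro that[of "(S, Gm', D)"]) auto
  qed
qed

lemma K_rule_conclusion_not_principal:
  assumes "K_rule ps c" "premise_parts s f = Some as"
  shows "c \<noteq> C + principal_part s f"
  using assms(1)
proof cases
  case (D_K As Gs G S P Om b)
  obtain S' Gm' D' where C: "C = (S', Gm', D')" by (cases C)
  show ?thesis
  proof
    assume c: "c = C + principal_part s f"
    show False
    proof (cases s)
      case Lhs
      with c D_K C have "f \<in># P" by simp
      with D_K assms(2) show False by (auto dest: premise_parts_not_atom_or_bot)
    next
      case Rhs
      with c D_K C have "f \<in># add_mset (Box G b) Om" by simp
      with D_K assms(2) Rhs show False
        by (auto dest: premise_parts_not_atom_or_bot premise_parts_Rhs_not_boxed simp: is_boxed_def)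
    qed
  qed
qed

definition initial_tseq :: "('a::finite) tseq \<Rightarrow> bool" where
  "initial_tseq c \<longleftrightarrow> wf_tseq c \<and>
     (Bot \<in># fst (snd c) \<or> (\<exists>q. At q \<in># fst (snd c) \<and> At q \<in># snd (snd c)))"

lemma derivable_initial_tseq: "initial_tseq c \<Longrightarrow> derivable n c"
  by (cases c) (auto simp: initial_tseq_def intro: derivable.init_at derivable.init_bot)

lemma initial_tseq_premise_part:
  assumes "premise_parts s f = Some as" "p \<in> set as" "initial_tseq (C + principal_part s f)"
  shows "initial_tseq (C + p)"
proof -
  have "wf_tseq (C + p)"
    using wf_tseq_premise_part[OF assms(1,2)] assms(3) by (simp add: initial_tseq_def)
  moreover have "f \<noteq> Bot" "f \<noteq> At q" for q
    using premise_parts_not_atom_or_bot[OF assms(1)] by (auto simp: is_atom_or_bot_def)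
  ultimately show ?thesis
    using assms(3) by (cases s) (auto simp: initial_tseq_def)
qed

lemma derivable_Suc: "derivable n c \<Longrightarrow> derivable (Suc n) c"
proof (induction rule: derivable.induct)
  case (step ps c n)
  then show ?case by (blast intro: derivable.step)
next
  case (stepK ps c n)
  then show ?case by (blast intro: derivable.stepK)
qed (blast intro: derivable.init_at derivable.init_bot)+

lemma derivable_premise_part:
  assumes "derivable n c" "c = C + principal_part s f" "premise_parts s f = Some as" "p \<in> set as"
  shows "derivable n (C + p)"
  using assms
proof (induction n c arbitrary: C s f as p rule: derivable.induct)
  case (init_at S Gm D q n)
  have "initial_tseq (C + principal_part s f)"
    using init_at.hyps by (auto simp: initial_tseq_def simp flip: init_at.prems(1))
  with init_at.prems(2,3) show ?case
    by (blast intro: derivable_initial_tseq initial_tseq_premise_part)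
next
  case (init_bot S Gm D n)
  have "initial_tseq (C + principal_part s f)"
    using init_bot.hyps by (auto simp: initial_tseq_def simp flip: init_bot.prems(1))
  with init_bot.prems(2,3) show ?case
    by (blast intro: derivable_initial_tseq initial_tseq_premise_part)
next
  case (stepK ps c n)
  then show ?case using K_rule_conclusion_not_principal[OF stepK.hyps(1) stepK.prems(2)] by simp
next
  case (step ps c n)
  have premise_derivable: "derivable n q" if "q \<in> set ps" for q
    using step.IH that by blast
  have IH: "derivable n (D + p)" if "D + principal_part s f \<in> set ps" for D
    using step.IH that step.prems(2,3) by blast
  obtain s' f' C' as' where r: "premise_parts s' f' = Some as'" "c = C' + principal_part s' f'"
    "ps = map ((+) C') as'"
    using nonK_rule_decompose[OF step.hyps(1)] .
  show ?case
  proof (cases "(s', f') = (s, f)")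
    case True
    with r(1,2) step.prems(1,2) have "C' = C" "as' = as" by simp_all
    with r(3) step.prems(3) have "C + p \<in> set ps" by simp
    then show ?thesis by (intro derivable_Suc premise_derivable)
  next
    case False
    obtain E where E: "C = E + principal_part s' f'" "C' = E + principal_part s f"
      using add_principal_part_eqE[OF _ False] r(2) step.prems(1) by metis
    have "derivable n (E + p + p')" if "p' \<in> set as'" for p'
    proof -
      have "C' + p' \<in> set ps" using r(3) that by simp
      moreover have "C' + p' = (E + p') + principal_part s f" using E(2) by (simp add: ac_simps)
      ultimately have "derivable n (E + p' + p)" using IH by simp
      then show ?thesis by (simp add: ac_simps)
    qed
    then have "derivable (Suc n) (E + p + principal_part s' f')"
      by (intro derivable.step[OF nonK_rule_premise_parts[OF r(1)]]) simp
    with E show ?thesis by (simp add: ac_simps)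
  qed
qed

theorem proposition6p10:
  fixes ps :: "('a::finite) tseq list" and c :: "'a tseq" and n :: nat
  assumes "nonK_rule ps c" and "derivable n c"
  shows "\<forall>p\<in>set ps. derivable n p"
proof -
  obtain s f C as where "premise_parts s f = Some as" "c = C + principal_part s f" "ps = map ((+) C) as"
    using nonK_rule_decompose[OF assms(1)] .
  with assms(2) show ?thesis by (auto intro: derivable_premise_part)
qed

end
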